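(* Let $G\subset\mathrm{Homeo}_+(\mathbb{S}^2)$ be a sharply $3$-transitive group containing the rotation group $\mathrm{Rot}(\mathbb{S}^2)$. Then every $g\in G_2$ permutes parallels: equivalently, viewing $g$ as a homeomorphism of $\mathbb{C}$ fixing $0$ (via stereographic projection), $g$ maps every circle centered at the origin onto a circle centered at the origin.
   Context: $\mathrm{Homeo}_+(\mathbb{S}^2)$ is the group of orientation-preserving homeomorphisms of the unit sphere; $\mathrm{Rot}(\mathbb{S}^2)=SO(3)$ acting on $\mathbb{S}^2$. $\mathbb{S}^2$ is identified with $\mathbb{C}\cup\{\infty\}$ by stereographic projection from the North Pole $\mathbf{\infty}$; $\mathbf{0}$ is the South Pole. $G_2=\{g\in G: g(\mathbf{0})=\mathbf{0},\ g(\mathbf{\infty})=\mathbf{\infty}\}$. Parallels are the circles on $\mathbb{S}^2$ of constant latitude with respect to the axis through $\mathbf{0}$ and $\mathbf{\infty}$ (images of circles in $\mathbb{C}$ centered at $0$). $G$ is sharply $3$-transitive if any triple of distinct points can be mapped onto any other triple of distinct points by an element of $G$, and the only element of $G$ fixing each point of a triple of distinct points is the identity. *)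

theory Defs
  imports "HOL-Homology.Homology" "HOL-Algebra.Bij"
begin

text \<open>The unit sphere S^2, realised as the topological space nsphere 2 (points are
  functions nat => real, supported on coordinates 0,1,2, of Euclidean norm 1).\<close>
abbreviation S2 :: "(nat \<Rightarrow> real) set" where
  "S2 \<equiv> topspace (nsphere 2)"

text \<open>Orientation-preserving homeomorphisms of S^2 (Brouwer degree 1), as elements of
  the group of bijections of S2 (HOL-Algebra BijGroup, extensional maps).\<close>
definition Homeo_plus_S2 :: "((nat \<Rightarrow> real) \<Rightarrow> (nat \<Rightarrow> real)) set" where
  "Homeo_plus_S2 = {g \<in> Bij S2. homeomorphic_map (nsphere 2) (nsphere 2) g
                                 \<and> Brouwer_degree2 2 g = 1}"

definition det3 :: "(nat \<Rightarrow> nat \<Rightarrow> real) \<Rightarrow> real" where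
  "det3 A = A 0 0 * (A 1 1 * A 2 2 - A 1 2 * A 2 1)
          - A 0 1 * (A 1 0 * A 2 2 - A 1 2 * A 2 0)
          + A 0 2 * (A 1 0 * A 2 1 - A 1 1 * A 2 0)"

definition SO3 :: "(nat \<Rightarrow> nat \<Rightarrow> real) set" where
  "SO3 = {A. (\<forall>i<3. \<forall>j<3. (\<Sum>k<3. A i k * A j k) = (if i = j then 1 else 0)) \<and> det3 A = 1}"

definition mat_act :: "(nat \<Rightarrow> nat \<Rightarrow> real) \<Rightarrow> (nat \<Rightarrow> real) \<Rightarrow> (nat \<Rightarrow> real)" where
  "mat_act A x = (\<lambda>i. if i < 3 then (\<Sum>j<3. A i j * x j) else 0)"

definition Rot_S2 :: "((nat \<Rightarrow> real) \<Rightarrow> (nat \<Rightarrow> real)) set" where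
  "Rot_S2 = {restrict (mat_act A) S2 | A. A \<in> SO3}"

definition sharply_3_transitive :: "((nat \<Rightarrow> real) \<Rightarrow> (nat \<Rightarrow> real)) set \<Rightarrow> bool" where
  "sharply_3_transitive G \<longleftrightarrow>
     (\<forall>a\<in>S2. \<forall>b\<in>S2. \<forall>c\<in>S2. \<forall>a'\<in>S2. \<forall>b'\<in>S2. \<forall>c'\<in>S2.
        a \<noteq> b \<and> a \<noteq> c \<and> b \<noteq> c \<and> a' \<noteq> b' \<and> a' \<noteq> c' \<and> b' \<noteq> c' \<longrightarrow>
        (\<exists>g\<in>G. g a = a' \<and> g b = b' \<and> g c = c')) \<and>
     (\<forall>g\<in>G. \<forall>a\<in>S2. \<forall>b\<in>S2. \<forall>c\<in>S2.
        a \<noteq> b \<and> a \<noteq> c \<and> b \<noteq> c \<and> g a = a \<and> g b = b \<and> g c = c \<longrightarrow>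
        (\<forall>x\<in>S2. g x = x))"

text \<open>North pole (= infinity under stereographic projection from it) and South pole (= 0).\<close>
definition north_pole :: "nat \<Rightarrow> real" where
  "north_pole = (\<lambda>i. if i = 2 then 1 else 0)"

definition south_pole :: "nat \<Rightarrow> real" where
  "south_pole = (\<lambda>i. if i = 2 then -1 else 0)"

definition G2 :: "((nat \<Rightarrow> real) \<Rightarrow> (nat \<Rightarrow> real)) set \<Rightarrow> ((nat \<Rightarrow> real) \<Rightarrow> (nat \<Rightarrow> real)) set" where
  "G2 G = {g \<in> G. g south_pole = south_pole \<and> g north_pole = north_pole}"

definition parallel :: "real \<Rightarrow> (nat \<Rightarrow> real) set" where
  "parallel c = {x \<in> S2. x 2 = c}"

definition parallels :: "(nat \<Rightarrow> real) set set" where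
  "parallels = {parallel c | c. -1 < c \<and> c < 1}"

end

theory Submission
  imports Defs
begin

text \<open>
  A map of \<open>S\<^sup>n\<close> without fixed points is homotopic to the antipodal map, which has
  degree \<open>(-1)^(n+1)\<close>; so every orientation-preserving homeomorphism of \<open>S\<^sup>2\<close> has a
  fixed point. Hence an element of \<open>G\<close> swapping the two poles fixes a third point, and its
  square, fixing three points, is the identity by sharpness. Fixing one such swap \<open>\<sigma>\<close>,
  both \<open>\<sigma>\<close> and every \<open>g \<sigma>\<close> with \<open>g \<in> G\<^sub>2\<close> are involutions, so conjugation by \<open>\<sigma>\<close> is
  inversion on \<open>G\<^sub>2\<close>; inversion being a homomorphism, \<open>G\<^sub>2\<close> is abelian. It contains the
  rotations about the polar axis, which act transitively on each parallel, and a map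
  commuting with all of them carries the orbit of a point onto the orbit of its image.
\<close>

section \<open>Fixed points of maps of spheres\<close>

lemma continuous_map_into_nsphere:
  assumes "\<And>i. continuous_map X euclideanreal (\<lambda>x. f x i)"
    and "\<And>x. x \<in> topspace X \<Longrightarrow> f x \<in> topspace (nsphere p)"
  shows "continuous_map X (nsphere p) f"
  using assms unfolding nsphere
  by (auto simp: continuous_map_in_subtopology continuous_map_componentwise_UNIV)

definition reflect_coord :: "nat \<Rightarrow> (nat \<Rightarrow> real) \<Rightarrow> nat \<Rightarrow> real" where
  "reflect_coord k = (\<lambda>x i. if i = k then - x i else x i)"

definition reflect_below :: "nat \<Rightarrow> (nat \<Rightarrow> real) \<Rightarrow> nat \<Rightarrow> real" where
  "reflect_below m = (\<lambda>x i. if i < m then - x i else x i)"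

lemma continuous_map_reflect_coord:
  "continuous_map (nsphere p) (nsphere p) (reflect_coord k)"
  unfolding reflect_coord_def by (rule continuous_map_nsphere_reflection)

lemma continuous_map_nsphere_swap:
  assumes "j \<le> p" "k \<le> p"
  shows "continuous_map (nsphere p) (nsphere p) (\<lambda>x. x \<circ> Transposition.transpose j k)"
proof (rule continuous_map_into_nsphere)
  show "continuous_map (nsphere p) euclideanreal (\<lambda>x. (x \<circ> Transposition.transpose j k) i)" for i
    by (simp add: continuous_map_nsphere_projection)
  fix x assume x: "x \<in> topspace (nsphere p)"
  have "(\<Sum>i\<le>p. (x \<circ> Transposition.transpose j k) i ^ 2)
      = (\<Sum>i \<in> Transposition.transpose j k ` {..p}. x i ^ 2)"
    by (simp add: sum.reindex o_def)
  also have "\<dots> = (\<Sum>i\<le>p. x i ^ 2)"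
    using assms by (simp add: transpose_image_eq)
  finally show "x \<circ> Transposition.transpose j k \<in> topspace (nsphere p)"
    using x assms by (auto simp: nsphere Transposition.transpose_def)
qed

lemma Brouwer_degree2_reflect_coord:
  assumes "k \<le> p"
  shows "Brouwer_degree2 p (reflect_coord k) = -1"
proof -
  define s where "s = (\<lambda>x::nat \<Rightarrow> real. x \<circ> Transposition.transpose 0 k)"
  have s: "continuous_map (nsphere p) (nsphere p) s"
    unfolding s_def using assms by (simp add: continuous_map_nsphere_swap)
  have "Brouwer_degree2 p s * Brouwer_degree2 p s = Brouwer_degree2 p (s \<circ> s)"
    using Brouwer_degree2_compose[OF s s] by simp
  also have "s \<circ> s = id"
    by (auto simp: s_def fun_eq_iff transpose_involutory)
  finally have ss: "Brouwer_degree2 p s * Brouwer_degree2 p s = 1"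
    by (simp only: Brouwer_degree2_id)
  have "reflect_coord k = s \<circ> reflect_coord 0 \<circ> s"
    by (auto simp: s_def reflect_coord_def fun_eq_iff Transposition.transpose_def)
  then have "Brouwer_degree2 p (reflect_coord k)
      = Brouwer_degree2 p s * Brouwer_degree2 p (reflect_coord 0) * Brouwer_degree2 p s"
    using Brouwer_degree2_compose[OF continuous_map_compose[OF s continuous_map_reflect_coord] s]
      Brouwer_degree2_compose[OF s continuous_map_reflect_coord]
    by (simp add: o_assoc)
  also have "Brouwer_degree2 p (reflect_coord 0) = -1"
    using Brouwer_degree2_reflection by (simp add: reflect_coord_def)
  finally show ?thesis using ss by (simp add: algebra_simps)
qed

lemma continuous_map_reflect_below:
  "continuous_map (nsphere p) (nsphere p) (reflect_below m)"
proof (rule continuous_map_into_nsphere)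
  show "continuous_map (nsphere p) euclideanreal (\<lambda>x. reflect_below m x i)" for i
    by (simp add: reflect_below_def continuous_map_nsphere_projection continuous_map_minus)
  show "reflect_below m x \<in> topspace (nsphere p)" if "x \<in> topspace (nsphere p)" for x
  proof -
    have "(reflect_below m x i)\<^sup>2 = (x i)\<^sup>2" for i
      by (simp add: reflect_below_def)
    then show ?thesis
      using that by (simp add: nsphere reflect_below_def)
  qed
qed

lemma Brouwer_degree2_reflect_below:
  "m \<le> Suc p \<Longrightarrow> Brouwer_degree2 p (reflect_below m) = (-1) ^ m"
proof (induction m)
  case 0
  have "reflect_below 0 = id" by (simp add: reflect_below_def fun_eq_iff)
  then show ?case by (simp only: Brouwer_degree2_id power_0)
next
  case (Suc m)
  have "reflect_below (Suc m) = reflect_coord m \<circ> reflect_below m"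
    by (auto simp: reflect_below_def reflect_coord_def fun_eq_iff)
  then have "Brouwer_degree2 p (reflect_below (Suc m))
      = Brouwer_degree2 p (reflect_coord m) * Brouwer_degree2 p (reflect_below m)"
    by (simp add: Brouwer_degree2_compose continuous_map_reflect_below continuous_map_reflect_coord)
  then show ?case
    using Suc by (simp add: Brouwer_degree2_reflect_coord)
qed

lemma Brouwer_degree2_antipodal: "Brouwer_degree2 p (\<lambda>x i. - x i) = (-1) ^ Suc p"
proof -
  have "Brouwer_degree2 p (\<lambda>x i. - x i) = Brouwer_degree2 p (reflect_below (Suc p))"
    by (rule Brouwer_degree2_eq) (auto simp: nsphere reflect_below_def fun_eq_iff)
  then show ?thesis by (simp add: Brouwer_degree2_reflect_below)
qed

lemma nsphere_eq_if_proportional: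
  assumes x: "x \<in> topspace (nsphere p)" and y: "y \<in> topspace (nsphere p)"
    and scaled: "\<And>i. (1 - t) * y i = t * x i"
  shows "y = x"
proof -
  have "(1 - t)\<^sup>2 = (1 - t)\<^sup>2 * (\<Sum>i\<le>p. (y i)\<^sup>2)"
    using y by (simp add: nsphere)
  also have "\<dots> = (\<Sum>i\<le>p. (t * x i)\<^sup>2)"
    by (simp add: sum_distrib_left flip: power_mult_distrib scaled)
  also have "\<dots> = t\<^sup>2"
    using x by (simp add: nsphere power_mult_distrib flip: sum_distrib_left)
  finally have t: "t = 1/2"
    by (simp add: power2_eq_square algebra_simps)
  show ?thesis
  proof
    fix i
    show "y i = x i"
      using scaled[of i] unfolding t by simp
  qed
qed

lemma continuous_map_nsphere_normalise:
  assumes cont: "\<And>i. continuous_map X euclideanreal (\<lambda>z. u z i)"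
    and high: "\<And>z i. z \<in> topspace X \<Longrightarrow> p < i \<Longrightarrow> u z i = 0"
    and nonzero: "\<And>z. z \<in> topspace X \<Longrightarrow> (\<Sum>i\<le>p. (u z i)\<^sup>2) \<noteq> 0"
  shows "continuous_map X (nsphere p) (\<lambda>z i. u z i / sqrt (\<Sum>j\<le>p. (u z j)\<^sup>2))"
proof (rule continuous_map_into_nsphere)
  have "continuous_map X euclideanreal (\<lambda>z. sqrt (\<Sum>j\<le>p. (u z j)\<^sup>2))"
    by (intro continuous_map_sqrt continuous_map_sum continuous_map_real_pow cont) auto
  then show "continuous_map X euclideanreal (\<lambda>z. u z i / sqrt (\<Sum>j\<le>p. (u z j)\<^sup>2))" for i
    using nonzero by (intro continuous_map_real_divide cont) auto
  show "(\<lambda>i. u z i / sqrt (\<Sum>j\<le>p. (u z j)\<^sup>2)) \<in> topspace (nsphere p)" if z: "z \<in> topspace X" for z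
  proof -
    have "(\<Sum>i\<le>p. (u z i / sqrt (\<Sum>j\<le>p. (u z j)\<^sup>2))\<^sup>2) = (\<Sum>i\<le>p. (u z i)\<^sup>2) / (\<Sum>j\<le>p. (u z j)\<^sup>2)"
      by (simp add: power_divide sum_nonneg flip: sum_divide_distrib)
    also have "\<dots> = 1"
      using nonzero[OF z] by (rule divide_self)
    finally show ?thesis
      using high[OF z] by (simp add: nsphere)
  qed
qed

lemma homotopic_nsphere_maps_if_never_antipodal:
  assumes f: "continuous_map X (nsphere p) f" and g: "continuous_map X (nsphere p) g"
    and never_antipodal: "\<And>x. x \<in> topspace X \<Longrightarrow> f x \<noteq> (\<lambda>i. - g x i)"
  shows "homotopic_with (\<lambda>h. True) X (nsphere p) f g"
proof -
  let ?T = "prod_topology (top_of_set {0..1::real}) X"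
  define u where "u = (\<lambda>z i. (1 - fst z) * f (snd z) i + fst z * g (snd z) i)"
  have fS: "f x \<in> topspace (nsphere p)" and gS: "g x \<in> topspace (nsphere p)"
    if "x \<in> topspace X" for x
    using continuous_map_image_subset_topspace[OF f] continuous_map_image_subset_topspace[OF g] that
    by blast+
  have high: "u z i = 0" if "z \<in> topspace ?T" "p < i" for z i
    using that fS gS by (auto simp: u_def nsphere)
  have nonzero: "(\<Sum>i\<le>p. (u z i)\<^sup>2) \<noteq> 0" if z: "z \<in> topspace ?T" for z
  proof
    obtain t x where z_eq: "z = (t, x)" and x: "x \<in> topspace X"
      using z by auto
    assume "(\<Sum>i\<le>p. (u z i)\<^sup>2) = 0"
    then have "u z i = 0" for i
      using high[OF z, of i] by (cases "i \<le> p") (auto simp: sum_nonneg_eq_0_iff)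
    moreover have "(\<lambda>i. - g x i) \<in> topspace (nsphere p)"
      using gS[OF x] by (simp add: nsphere)
    ultimately have "f x = (\<lambda>i. - g x i)"
      using fS[OF x] by (intro nsphere_eq_if_proportional[where t = t])
        (simp_all add: u_def z_eq eq_neg_iff_add_eq_0)
    with never_antipodal x show False by blast
  qed
  have fst_cont: "continuous_map ?T euclideanreal fst"
    using continuous_map_fst continuous_map_into_fulltopology by blast
  have coord_cont: "continuous_map ?T euclideanreal (\<lambda>z. h (snd z) i)"
    if "continuous_map X (nsphere p) h" for h i
    using continuous_map_compose[OF continuous_map_snd
        continuous_map_compose[OF that continuous_map_nsphere_projection]]
    by (simp add: o_def)
  have "continuous_map ?T euclideanreal (\<lambda>z. u z i)" for i
    unfolding u_def
    by (intro continuous_map_add continuous_map_real_mult continuous_map_diff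
        continuous_map_canonical_const fst_cont coord_cont f g)
  then have H: "continuous_map ?T (nsphere p) (\<lambda>z i. u z i / sqrt (\<Sum>j\<le>p. (u z j)\<^sup>2))"
    using high nonzero by (intro continuous_map_nsphere_normalise)
  have "(\<lambda>i. u (0, x) i / sqrt (\<Sum>j\<le>p. (u (0, x) j)\<^sup>2)) = f x"
    "(\<lambda>i. u (1, x) i / sqrt (\<Sum>j\<le>p. (u (1, x) j)\<^sup>2)) = g x"
    if "x \<in> topspace X" for x
    using fS[OF that] gS[OF that] by (simp_all add: u_def nsphere)
  with H show ?thesis
    by (subst homotopic_with) auto
qed

lemma nsphere_map_fixed_point:
  assumes f: "continuous_map (nsphere p) (nsphere p) f"
    and degree: "Brouwer_degree2 p f \<noteq> (-1) ^ Suc p"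
  shows "\<exists>x \<in> topspace (nsphere p). f x = x"
proof (rule ccontr)
  assume no_fix: "\<not> (\<exists>x \<in> topspace (nsphere p). f x = x)"
  have "continuous_map (nsphere p) (nsphere p) (\<lambda>x i. - x i)"
    by (intro continuous_map_into_nsphere continuous_map_minus continuous_map_nsphere_projection)
      (simp add: nsphere)
  then have "homotopic_with (\<lambda>h. True) (nsphere p) (nsphere p) f (\<lambda>x i. - x i)"
    using no_fix by (intro homotopic_nsphere_maps_if_never_antipodal f) auto
  then show False
    using degree Brouwer_degree2_homotopic Brouwer_degree2_antipodal by metis
qed

lemma Homeo_plus_S2_fixed_point:
  assumes "g \<in> Homeo_plus_S2"
  obtains x where "x \<in> S2" "g x = x"
proof -
  have "continuous_map (nsphere 2) (nsphere 2) g" "Brouwer_degree2 2 g \<noteq> (-1) ^ Suc 2"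
    using assms by (auto simp: Homeo_plus_S2_def homeomorphic_imp_continuous_map)
  then show ?thesis
    using nsphere_map_fixed_point that by blast
qed

section \<open>The stabiliser of the poles is abelian\<close>

lemma (in group) commute_if_products_with_involution_involutive:
  assumes H: "H \<subseteq> carrier G" "\<And>g h. g \<in> H \<Longrightarrow> h \<in> H \<Longrightarrow> g \<otimes> h \<in> H"
    and s: "s \<in> carrier G" "s \<otimes> s = \<one>"
    and invol: "\<And>g. g \<in> H \<Longrightarrow> (g \<otimes> s) \<otimes> (g \<otimes> s) = \<one>"
    and gh: "g \<in> H" "h \<in> H"
  shows "g \<otimes> h = h \<otimes> g"
proof -
  have conj: "s \<otimes> k \<otimes> s = inv k" if k: "k \<in> H" for k
  proof -
    have "k \<otimes> (s \<otimes> k \<otimes> s) = \<one>"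
      using invol[OF k] k H s by (simp add: m_assoc subsetD)
    moreover have "k \<in> carrier G"
      using k H by blast
    ultimately show ?thesis
      using s by (metis inv_comm inv_equality m_closed)
  qed
  have gH: "g \<in> carrier G" and hH: "h \<in> carrier G"
    using gh H by auto
  have "inv (g \<otimes> h) = s \<otimes> (g \<otimes> h) \<otimes> s"
    using conj[OF H(2)[OF gh]] by simp
  also have "\<dots> = (s \<otimes> g \<otimes> s) \<otimes> (s \<otimes> h \<otimes> s)"
    using gH hH s by (simp add: m_assoc flip: m_assoc[of s s])
  also have "\<dots> = inv g \<otimes> inv h"
    using conj gh by simp
  finally have "inv (g \<otimes> h) = inv (h \<otimes> g)"
    using gH hH by (simp add: inv_mult_group)
  then show ?thesis
    using gH hH by (metis inv_inv m_closed)
qed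

lemma subgroup_BijGroup_Bij: "subgroup G (BijGroup S) \<Longrightarrow> G \<subseteq> Bij S"
  using subgroup.subset by (fastforce simp: BijGroup_def)

lemma subgroup_BijGroup_mult_apply:
  "subgroup G (BijGroup S) \<Longrightarrow> f \<in> G \<Longrightarrow> g \<in> G \<Longrightarrow> x \<in> S
    \<Longrightarrow> (f \<otimes>\<^bsub>BijGroup S\<^esub> g) x = f (g x)"
  using subgroup_BijGroup_Bij by (fastforce simp: BijGroup_def compose_def)

lemma BijGroup_eq_one:
  assumes "f \<in> Bij S" "\<And>x. x \<in> S \<Longrightarrow> f x = x"
  shows "f = \<one>\<^bsub>BijGroup S\<^esub>"
  using assms
  by (auto simp: BijGroup_def fun_eq_iff dest: Bij_imp_extensional[THEN extensional_arb])

lemma in_S2_iff: "x \<in> S2 \<longleftrightarrow> (x 0)\<^sup>2 + (x 1)\<^sup>2 + (x 2)\<^sup>2 = 1 \<and> (\<forall>i>2. x i = 0)"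
proof -
  have "{..2::nat} = {0, 1, 2}" by auto
  then show ?thesis by (simp add: nsphere add.assoc)
qed

lemma poles_in_S2: "south_pole \<in> S2" "north_pole \<in> S2" "south_pole \<noteq> north_pole"
  by (auto simp: in_S2_iff south_pole_def north_pole_def fun_eq_iff)

lemma less_3_cases: "(i::nat) < 3 \<Longrightarrow> i = 0 \<or> i = 1 \<or> i = 2"
  by auto

lemma sum_lessThan_3:
  fixes f :: "nat \<Rightarrow> real"
  shows "(\<Sum>i<3. f i) = f 0 + f 1 + f 2"
proof -
  have "{..<3::nat} = {0, 1, 2}" by auto
  then show ?thesis by (simp add: add.assoc)
qed

lemma S2_eqI:
  assumes "x \<in> S2" "y \<in> S2" "x 0 = y 0" "x 1 = y 1" "x 2 = y 2"
  shows "x = y"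
proof
  fix i :: nat
  show "x i = y i"
    using assms less_3_cases[of i] by (cases "i < 3") (auto simp: in_S2_iff)
qed

lemma S2_height_bounds:
  assumes x: "x \<in> S2" and "x \<noteq> north_pole" "x \<noteq> south_pole"
  shows "-1 < x 2 \<and> x 2 < 1"
proof -
  have sum: "(x 0)\<^sup>2 + (x 1)\<^sup>2 + (x 2)\<^sup>2 = 1"
    using x by (simp add: in_S2_iff)
  have "(x 2)\<^sup>2 \<noteq> 1"
  proof
    assume "(x 2)\<^sup>2 = 1"
    then have "x 0 = 0" "x 1 = 0"
      using sum by (simp_all add: add_nonneg_eq_0_iff)
    with \<open>(x 2)\<^sup>2 = 1\<close> x poles_in_S2 assms(2,3) show False
      by (auto simp: power2_eq_1_iff north_pole_def south_pole_def intro: S2_eqI)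
  qed
  moreover have "(x 2)\<^sup>2 \<le> 1"
    using sum zero_le_power2[of "x 0"] zero_le_power2[of "x 1"] by linarith
  ultimately show ?thesis
    by (auto simp: abs_square_le_1 power2_eq_1_iff abs_le_iff)
qed

lemma sharply_3_transitive_triple:
  assumes "sharply_3_transitive G" "a \<in> S2" "b \<in> S2" "c \<in> S2" "a' \<in> S2" "b' \<in> S2" "c' \<in> S2"
    and "a \<noteq> b" "a \<noteq> c" "b \<noteq> c" "a' \<noteq> b'" "a' \<noteq> c'" "b' \<noteq> c'"
  obtains g where "g \<in> G" "g a = a'" "g b = b'" "g c = c'"
  using assms unfolding sharply_3_transitive_def by blast

lemma sharply_3_transitive_rigid:
  assumes "sharply_3_transitive G" "g \<in> G" "a \<in> S2" "b \<in> S2" "c \<in> S2"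
    and "a \<noteq> b" "a \<noteq> c" "b \<noteq> c" "g a = a" "g b = b" "g c = c" "x \<in> S2"
  shows "g x = x"
  using assms unfolding sharply_3_transitive_def by blast

lemma sharply_3_transitive_involution:
  assumes G: "subgroup G (BijGroup S2)" "sharply_3_transitive G"
    and h: "h \<in> G" and ab: "a \<in> S2" "b \<in> S2" "a \<noteq> b" "h a = b" "h b = a"
    and c: "c \<in> S2" "h c = c"
  shows "h \<otimes>\<^bsub>BijGroup S2\<^esub> h = \<one>\<^bsub>BijGroup S2\<^esub>"
proof (rule BijGroup_eq_one)
  have hh: "h \<otimes>\<^bsub>BijGroup S2\<^esub> h \<in> G"
    using subgroup.m_closed[OF G(1) h h] .
  then show "h \<otimes>\<^bsub>BijGroup S2\<^esub> h \<in> Bij S2"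
    using subgroup_BijGroup_Bij[OF G(1)] by blast
  have "c \<noteq> a" "c \<noteq> b"
    using ab c by auto
  then show "(h \<otimes>\<^bsub>BijGroup S2\<^esub> h) x = x" if "x \<in> S2" for x
    using sharply_3_transitive_rigid[OF G(2) hh ab(1,2) c(1) ab(3) _ _ _ _ _ that] ab c
    by (simp add: subgroup_BijGroup_mult_apply[OF G(1) h h])
qed

lemma G2_mult_closed:
  assumes "subgroup G (BijGroup S2)" "g \<in> G2 G" "h \<in> G2 G"
  shows "g \<otimes>\<^bsub>BijGroup S2\<^esub> h \<in> G2 G"
  using assms subgroup.m_closed[OF assms(1)] poles_in_S2
  by (simp add: G2_def subgroup_BijGroup_mult_apply)

lemma G2_commute:
  assumes G: "subgroup G (BijGroup S2)" "G \<subseteq> Homeo_plus_S2" "sharply_3_transitive G"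
    and gh: "g \<in> G2 G" "h \<in> G2 G"
  shows "g \<otimes>\<^bsub>BijGroup S2\<^esub> h = h \<otimes>\<^bsub>BijGroup S2\<^esub> g"
proof -
  interpret B: group "BijGroup S2" by (rule group_BijGroup)
  have swap_invol: "k \<otimes>\<^bsub>BijGroup S2\<^esub> k = \<one>\<^bsub>BijGroup S2\<^esub>"
    if k: "k \<in> G" "k south_pole = north_pole" "k north_pole = south_pole" for k
  proof -
    obtain c where "c \<in> S2" "k c = c"
      using Homeo_plus_S2_fixed_point k(1) G(2) by blast
    then show ?thesis
      using sharply_3_transitive_involution[OF G(1,3) k(1) poles_in_S2 k(2,3)] by blast
  qed
  define e :: "nat \<Rightarrow> real" where "e = (\<lambda>i. if i = 0 then 1 else 0)"
  have e: "e \<in> S2" "e \<noteq> south_pole" "e \<noteq> north_pole"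
    using in_topspace_nsphere by (auto simp: e_def south_pole_def north_pole_def fun_eq_iff)
  obtain s where s: "s \<in> G" "s south_pole = north_pole" "s north_pole = south_pole"
    using sharply_3_transitive_triple[OF G(3) poles_in_S2(1,2) e(1) poles_in_S2(2,1) e(1)]
      poles_in_S2(3) e(2,3) by (metis (no_types))
  show ?thesis
  proof (rule B.commute_if_products_with_involution_involutive)
    show "G2 G \<subseteq> carrier (BijGroup S2)"
      using subgroup.subset[OF G(1)] by (auto simp: G2_def)
    show "s \<in> carrier (BijGroup S2)" "s \<otimes>\<^bsub>BijGroup S2\<^esub> s = \<one>\<^bsub>BijGroup S2\<^esub>"
      using s subgroup.subset[OF G(1)] swap_invol by auto
    show "(k \<otimes>\<^bsub>BijGroup S2\<^esub> s) \<otimes>\<^bsub>BijGroup S2\<^esub> (k \<otimes>\<^bsub>BijGroup S2\<^esub> s) = \<one>\<^bsub>BijGroup S2\<^esub>"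
      if "k \<in> G2 G" for k
      using that s poles_in_S2 subgroup.m_closed[OF G(1)]
      by (intro swap_invol) (auto simp: G2_def subgroup_BijGroup_mult_apply[OF G(1)])
  qed (use gh G2_mult_closed[OF G(1)] in auto)
qed

section \<open>Rotations about the polar axis\<close>

definition axial_rotation_matrix :: "real \<Rightarrow> real \<Rightarrow> nat \<Rightarrow> nat \<Rightarrow> real" where
  "axial_rotation_matrix a b = (\<lambda>i j.
     if (i, j) = (0, 0) \<or> (i, j) = (1, 1) then a
     else if (i, j) = (0, 1) then - b
     else if (i, j) = (1, 0) then b
     else if (i, j) = (2, 2) then 1 else 0)"

definition axial_rotation :: "real \<Rightarrow> real \<Rightarrow> (nat \<Rightarrow> real) \<Rightarrow> nat \<Rightarrow> real" where
  "axial_rotation a b = restrict (mat_act (axial_rotation_matrix a b)) S2"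

lemma axial_rotation_matrix_SO3:
  assumes "a\<^sup>2 + b\<^sup>2 = 1"
  shows "axial_rotation_matrix a b \<in> SO3"
proof -
  have "(\<forall>i<3. P i) \<longleftrightarrow> P 0 \<and> P 1 \<and> P 2" for P :: "nat \<Rightarrow> bool"
    using less_3_cases by auto
  then show ?thesis
    using assms by (simp add: SO3_def det3_def axial_rotation_matrix_def sum_lessThan_3 power2_eq_square)
qed

lemma axial_rotation_Rot_S2: "a\<^sup>2 + b\<^sup>2 = 1 \<Longrightarrow> axial_rotation a b \<in> Rot_S2"
  unfolding Rot_S2_def axial_rotation_def using axial_rotation_matrix_SO3 by blast

lemma axial_rotation_apply:
  assumes "x \<in> S2"
  shows "axial_rotation a b x
    = (\<lambda>i. if i = 0 then a * x 0 - b * x 1 else if i = 1 then b * x 0 + a * x 1 else x i)"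
proof
  fix i :: nat
  show "axial_rotation a b x i
    = (if i = 0 then a * x 0 - b * x 1 else if i = 1 then b * x 0 + a * x 1 else x i)"
    using assms less_3_cases[of i]
    by (cases "i < 3") (auto simp: axial_rotation_def mat_act_def axial_rotation_matrix_def
        sum_lessThan_3 in_S2_iff)
qed

lemma axial_rotation_in_S2:
  assumes "a\<^sup>2 + b\<^sup>2 = 1" "x \<in> S2"
  shows "axial_rotation a b x \<in> S2"
proof -
  have "(a * x 0 - b * x 1)\<^sup>2 + (b * x 0 + a * x 1)\<^sup>2 = (a\<^sup>2 + b\<^sup>2) * ((x 0)\<^sup>2 + (x 1)\<^sup>2)"
    by (simp add: power2_eq_square algebra_simps)
  then show ?thesis
    using assms by (simp add: axial_rotation_apply in_S2_iff)
qed

lemma axial_rotation_transitive: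
  assumes x: "x \<in> S2" and y: "y \<in> S2" and height: "x 2 = y 2"
  obtains a b where "a\<^sup>2 + b\<^sup>2 = 1" "axial_rotation a b x = y"
proof -
  define r where "r = (x 0)\<^sup>2 + (x 1)\<^sup>2"
  have ry: "(y 0)\<^sup>2 + (y 1)\<^sup>2 = r"
    using x y height by (simp add: in_S2_iff r_def)
  show ?thesis
  proof (cases "r = 0")
    case True
    then have "x 0 = 0" "x 1 = 0" "y 0 = 0" "y 1 = 0"
      using ry by (simp_all add: r_def add_nonneg_eq_0_iff)
    then have "axial_rotation 1 0 x = y"
      using x y height axial_rotation_in_S2[of 1 0 x] by (intro S2_eqI) (simp_all add: axial_rotation_apply)
    then show ?thesis
      using that[of 1 0] by simp
  next
    case False
    \<comment> \<open>\<open>a + i b = y / x\<close> for the complex numbers \<open>x 0 + i x 1\<close> and \<open>y 0 + i y 1\<close>\<close>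
    define a where "a = (x 0 * y 0 + x 1 * y 1) / r"
    define b where "b = (x 0 * y 1 - x 1 * y 0) / r"
    have "(x 0 * y 0 + x 1 * y 1)\<^sup>2 + (x 0 * y 1 - x 1 * y 0)\<^sup>2
        = ((x 0)\<^sup>2 + (x 1)\<^sup>2) * ((y 0)\<^sup>2 + (y 1)\<^sup>2)"
      by (simp add: power2_eq_square algebra_simps)
    then have "a\<^sup>2 + b\<^sup>2 = 1"
      using False ry
      by (simp add: a_def b_def r_def power_divide add_divide_distrib[symmetric] power2_eq_square)
    moreover have "a * x 0 - b * x 1 = r * y 0 / r" "b * x 0 + a * x 1 = r * y 1 / r"
      unfolding a_def b_def r_def
      by (simp_all add: power2_eq_square algebra_simps diff_divide_distrib add_divide_distrib)
    ultimately have "a\<^sup>2 + b\<^sup>2 = 1" "axial_rotation a b x = y"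
      using x y height False axial_rotation_in_S2 by (auto intro!: S2_eqI simp: axial_rotation_apply)
    then show ?thesis
      using that by blast
  qed
qed

lemma axial_rotation_G2:
  assumes "Rot_S2 \<subseteq> G" "a\<^sup>2 + b\<^sup>2 = 1"
  shows "axial_rotation a b \<in> G2 G"
  using assms axial_rotation_Rot_S2 poles_in_S2
  by (auto simp: G2_def axial_rotation_apply south_pole_def north_pole_def fun_eq_iff)

lemma image_parallel_if_commutes_with_axial_rotations:
  assumes g: "g \<in> Bij S2" "g south_pole = south_pole" "g north_pole = north_pole"
    and comm: "\<And>a b x. a\<^sup>2 + b\<^sup>2 = 1 \<Longrightarrow> x \<in> S2
                  \<Longrightarrow> g (axial_rotation a b x) = axial_rotation a b (g x)"
    and c: "-1 < c" "c < 1"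
  shows "g ` parallel c \<in> parallels"
proof -
  define p :: "nat \<Rightarrow> real"
    where "p = (\<lambda>i. if i = 0 then sqrt (1 - c\<^sup>2) else if i = 2 then c else 0)"
  have "c\<^sup>2 < 1"
    using c by (simp add: abs_square_less_1)
  then have p: "p \<in> S2" "p 2 = c"
    by (simp_all add: p_def in_S2_iff)
  have gp: "g p \<in> S2"
    using g(1) p(1) Bij_imp_funcset by blast
  have "p \<noteq> north_pole" "p \<noteq> south_pole"
    using p(2) c by (auto simp: north_pole_def south_pole_def)
  moreover have inj: "inj_on g S2"
    using g(1) by (simp add: Bij_def bij_betw_def)
  ultimately have "g p \<noteq> north_pole" "g p \<noteq> south_pole"
    using inj_on_eq_iff[OF inj p(1) poles_in_S2(1)] inj_on_eq_iff[OF inj p(1) poles_in_S2(2)] g(2,3)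
    by auto
  then have c': "-1 < g p 2" "g p 2 < 1"
    using S2_height_bounds[OF gp] by auto
  have "g ` parallel c = parallel (g p 2)"
  proof
    show "g ` parallel c \<subseteq> parallel (g p 2)"
    proof
      fix y
      assume "y \<in> g ` parallel c"
      then obtain x where x: "x \<in> S2" "x 2 = c" and y: "y = g x"
        by (auto simp: parallel_def)
      obtain a b where ab: "a\<^sup>2 + b\<^sup>2 = 1" and x_rot: "axial_rotation a b p = x"
        using axial_rotation_transitive[OF p(1) x(1)] p(2) x(2) by metis
      have "y = axial_rotation a b (g p)"
        using y x_rot comm[OF ab p(1)] by simp
      then show "y \<in> parallel (g p 2)"
        using axial_rotation_in_S2[OF ab gp] gp by (simp add: parallel_def axial_rotation_apply)
    qed
    show "parallel (g p 2) \<subseteq> g ` parallel c"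
    proof
      fix y
      assume "y \<in> parallel (g p 2)"
      then have y: "y \<in> S2" "g p 2 = y 2"
        by (auto simp: parallel_def)
      obtain a b where ab: "a\<^sup>2 + b\<^sup>2 = 1" and y_rot: "axial_rotation a b (g p) = y"
        using axial_rotation_transitive[OF gp y] by metis
      have "y = g (axial_rotation a b p)"
        using y_rot comm[OF ab p(1)] by simp
      moreover have "axial_rotation a b p \<in> parallel c"
        using axial_rotation_in_S2[OF ab p(1)] p by (simp add: parallel_def axial_rotation_apply)
      ultimately show "y \<in> g ` parallel c"
        by blast
    qed
  qed
  with c' show ?thesis
    by (auto simp: parallels_def)
qed

theorem mainTheorem16:
  fixes G :: "((nat \<Rightarrow> real) \<Rightarrow> (nat \<Rightarrow> real)) set"
  assumes "subgroup G (BijGroup S2)"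
    and "G \<subseteq> Homeo_plus_S2"
    and "sharply_3_transitive G"
    and "Rot_S2 \<subseteq> G"
  shows "\<forall>g\<in>G2 G. \<forall>P\<in>parallels. g ` P \<in> parallels"
proof (intro ballI)
  fix g P
  assume g: "g \<in> G2 G" and "P \<in> parallels"
  then obtain c where P: "P = parallel c" "-1 < c" "c < 1"
    by (auto simp: parallels_def)
  have "g (axial_rotation a b x) = axial_rotation a b (g x)"
    if ab: "a\<^sup>2 + b\<^sup>2 = 1" and x: "x \<in> S2" for a b x
    using G2_commute[OF assms(1-3) g axial_rotation_G2[OF assms(4) ab]]
      g axial_rotation_G2[OF assms(4) ab] x
    by (metis (no_types, lifting) G2_def mem_Collect_eq subgroup_BijGroup_mult_apply[OF assms(1)])
  moreover have "g \<in> Bij S2"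
    using g subgroup_BijGroup_Bij[OF assms(1)] by (auto simp: G2_def)
  ultimately show "g ` P \<in> parallels"
    unfolding P(1) using g P(2,3)
    by (intro image_parallel_if_commutes_with_axial_rotations) (auto simp: G2_def)
qed

end
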